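(* Let $u$ be a non-trivial u-p-word for $n$-permutations, and let $f$ be the number of occurrences of $\Diamond$ in $u$. Then $n\leq 3f+1$.
   Context: An $n$-permutation is a permutation of $\{1,\ldots,n\}$. For a word $w$ of distinct numbers, $\mathrm{red}(w)$ is obtained by replacing the $i$-th smallest letter by $i$. Let $\Diamond$ be a symbol not among the integers. A word $f_1\cdots f_n$ over the positive integers together with $\Diamond$, whose integer letters are pairwise distinct, covers an $n$-permutation $\pi$ if one can substitute real numbers for the occurrences of $\Diamond$ (independently) so that the resulting word has $n$ pairwise distinct entries and reduces to $\pi$; equivalently, $f_i<f_j\iff\pi_i<\pi_j$ for all positions $i,j$ holding integers. A u-p-word for $n$-permutations is a word $u_1\cdots u_N$, $N\geq n$, over this alphabet containing at least one $\Diamond$, such that every factor $u_i\cdots u_{i+n-1}$ ($1\leq i\leq N-n+1$) has pairwise distinct integer letters and every $n$-permutation is covered by exactly one of these factors. A u-p-word is trivial if all of its letters are $\Diamond$. *)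

theory Defs
  imports Complex_Main
begin

text \<open>Letters: None is the hole symbol (Diamond), Some k is the positive integer k.\<close>
type_synonym letter = "nat option"

definition is_perm :: "nat \<Rightarrow> nat list \<Rightarrow> bool" where
  "is_perm n \<pi> \<longleftrightarrow> length \<pi> = n \<and> distinct \<pi> \<and> set \<pi> = {1..n}"

definition distinct_ints :: "letter list \<Rightarrow> bool" where
  "distinct_ints w \<longleftrightarrow> (\<forall>i<length w. \<forall>j<length w. i \<noteq> j \<longrightarrow>
      w ! i \<noteq> None \<longrightarrow> w ! i \<noteq> w ! j)"

definition covers :: "letter list \<Rightarrow> nat list \<Rightarrow> bool" where
  "covers w \<pi> \<longleftrightarrow> length w = length \<pi> \<and>
     (\<exists>x :: nat \<Rightarrow> real.
        (\<forall>i<length w. \<forall>k. w ! i = Some k \<longrightarrow> x i = real k) \<and>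
        inj_on x {..<length w} \<and>
        (\<forall>i<length w. \<forall>j<length w. x i < x j \<longleftrightarrow> \<pi> ! i < \<pi> ! j))"

definition factor :: "letter list \<Rightarrow> nat \<Rightarrow> nat \<Rightarrow> letter list" where
  "factor u n i = take n (drop i u)"

definition up_word :: "nat \<Rightarrow> letter list \<Rightarrow> bool" where
  "up_word n u \<longleftrightarrow>
     length u \<ge> n \<and> None \<in> set u \<and> (\<forall>k. Some k \<in> set u \<longrightarrow> k > 0) \<and>
     (\<forall>i. i + n \<le> length u \<longrightarrow> distinct_ints (factor u n i)) \<and>
     (\<forall>\<pi>. is_perm n \<pi> \<longrightarrow>
        card {i. i + n \<le> length u \<and> covers (factor u n i) \<pi>} = 1)"

definition trivial_word :: "letter list \<Rightarrow> bool" where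
  "trivial_word u \<longleftrightarrow> (\<forall>a\<in>set u. a = None)"

end

theory Submission
  imports Defs
begin

(* If a hole at position p is followed n positions later by a letter, compare the windows
   starting at 0 and at p + 1 on patterns that agree with the window after the hole: only
   these two windows can fit such patterns, and since exactly one of them fits each of them,
   the first n - 1 positions of u carry at most one letter, so u has at least n - 2 holes.
   Otherwise (and symmetrically for a letter followed by a hole) the holes of u are
   n-periodic, so every window contains the same number k >= 1 of holes and u has at least
   (length u div n) * k holes. A permutation is determined by its covering window and its
   values at the holes of that window, hence n! <= (length u - n + 1) * n^k; with
   n^n <= (n!)^2 this forces n <= 2 (length u div n) k + 2. *)

lemma factor_nth: "i + n \<le> length u \<Longrightarrow> j < n \<Longrightarrow> factor u n i ! j = u!(i+j)"
  by (simp add: factor_def)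

lemma length_factor: "i + n \<le> length u \<Longrightarrow> length (factor u n i) = n"
  by (simp add: factor_def)

lemma is_perm_iff_subset:
  "is_perm n \<pi> \<longleftrightarrow> length \<pi> = n \<and> distinct \<pi> \<and> set \<pi> \<subseteq> {1..n}"
proof -
  have "set \<pi> = {1..n}" if "length \<pi> = n" "distinct \<pi>" "set \<pi> \<subseteq> {1..n}"
    using that by (intro card_subset_eq) (auto simp: distinct_card)
  then show ?thesis unfolding is_perm_def by blast
qed

lemma is_perm_nth_range: "is_perm n \<pi> \<Longrightarrow> j < n \<Longrightarrow> 1 \<le> \<pi>!j \<and> \<pi>!j \<le> n"
  unfolding is_perm_def by (metis atLeastAtMost_iff nth_mem)

lemma is_perm_nth_eq_iff: "is_perm n \<pi> \<Longrightarrow> j < n \<Longrightarrow> k < n \<Longrightarrow> \<pi>!j = \<pi>!k \<longleftrightarrow> j = k"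
  unfolding is_perm_def by (simp add: nth_eq_iff_index_eq)

section \<open>Realising permutations\<close>

definition ranks :: "(nat \<Rightarrow> real) \<Rightarrow> nat \<Rightarrow> nat list" where
  "ranks y n = map (\<lambda>j. card {l. l < n \<and> y l \<le> y j}) [0..<n]"

lemma ranks_nth: "j < n \<Longrightarrow> ranks y n ! j = card {l. l < n \<and> y l \<le> y j}"
  by (simp add: ranks_def)

lemma ranks_less_iff:
  assumes "j < n" "k < n"
  shows "ranks y n ! j < ranks y n ! k \<longleftrightarrow> y j < y k"
proof -
  have mono: "card {l. l < n \<and> y l \<le> y j} \<le> card {l. l < n \<and> y l \<le> y k}"
    if "y j \<le> y k" for j k
    using that by (intro card_mono) auto
  have strict: "card {l. l < n \<and> y l \<le> y j} < card {l. l < n \<and> y l \<le> y k}" if "y j < y k"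
  proof (rule psubset_card_mono)
    have "{l. l < n \<and> y l \<le> y j} \<subseteq> {l. l < n \<and> y l \<le> y k}" using that by auto
    moreover have "k \<notin> {l. l < n \<and> y l \<le> y j}" using that by simp
    ultimately show "{l. l < n \<and> y l \<le> y j} \<subset> {l. l < n \<and> y l \<le> y k}"
      using assms(2) by blast
  qed simp
  show ?thesis
    unfolding ranks_nth[OF assms(1)] ranks_nth[OF assms(2)]
    using mono[of k j] strict by (meson not_le)
qed

lemma is_perm_ranks:
  assumes "inj_on y {..<n}"
  shows "is_perm n (ranks y n)"
  unfolding is_perm_iff_subset
proof (intro conjI)
  show len: "length (ranks y n) = n" by (simp add: ranks_def)
  show "distinct (ranks y n)"
  proof (rule distinct_conv_nth[THEN iffD2], intro allI impI)
    fix j k assume "j < length (ranks y n)" "k < length (ranks y n)" "j \<noteq> k"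
    then have jk: "j < n" "k < n" "y j \<noteq> y k" using assms len by (auto simp: inj_on_def)
    then show "ranks y n ! j \<noteq> ranks y n ! k"
      using ranks_less_iff[OF jk(1,2)] ranks_less_iff[OF jk(2,1)] by (metis linorder_neq_iff)
  qed
  show "set (ranks y n) \<subseteq> {1..n}"
  proof
    fix r assume "r \<in> set (ranks y n)"
    then obtain j where j: "j < n" "r = card {l. l < n \<and> y l \<le> y j}" by (auto simp: ranks_def)
    have "j \<in> {l. l < n \<and> y l \<le> y j}" using j by simp
    then have "0 < r" using j(2) card_gt_0_iff by fastforce
    moreover have "r \<le> n" using j card_mono[of "{..<n}" "{l. l < n \<and> y l \<le> y j}"] by auto
    ultimately show "r \<in> {1..n}" by simp
  qed
qed

lemma covers_less:
  assumes "covers w \<pi>" "j < length w" "k < length w" "w!j = Some a" "w!k = Some b" "a < b"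
  shows "\<pi>!j < \<pi>!k"
proof -
  obtain x :: "nat \<Rightarrow> real" where
    x: "\<forall>i<length w. \<forall>k. w!i = Some k \<longrightarrow> x i = real k"
       "\<forall>i<length w. \<forall>j<length w. x i < x j \<longleftrightarrow> \<pi>!i < \<pi>!j"
    using assms(1) unfolding covers_def by blast
  have "x j < x k" using x(1) assms(2-) by auto
  then show ?thesis using x(2) assms(2,3) by blast
qed

text \<open>A real realisation of the letters of \<open>w\<close> in the order \<open>\<pi>\<close>: position \<open>j\<close> gets the largest
  letter \<open>a\<close> at a position \<open>l\<close> with \<open>\<pi>!l \<le> \<pi>!j\<close>, raised by \<open>(\<pi>!j - \<pi>!l) / (length w + 1) < 1\<close>;
  if there is no such letter it gets a value in \<open>(-1, 0)\<close>.\<close>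
definition fill_holes :: "letter list \<Rightarrow> nat list \<Rightarrow> nat \<Rightarrow> real" where
  "fill_holes w \<pi> j = Max (insert (real (\<pi>!j) / real (length w + 1) - 1)
     {real a + (real (\<pi>!j) - real (\<pi>!l)) / real (length w + 1)
       | l a. l < length w \<and> w!l = Some a \<and> \<pi>!l \<le> \<pi>!j})"

lemma finite_fill_holes_candidates:
  "finite {real a + (real (\<pi>!j) - real (\<pi>!l)) / real (length w + 1)
       | l a. l < length w \<and> w!l = Some a \<and> \<pi>!l \<le> \<pi>!j}" (is "finite ?S")
proof (rule finite_subset)
  show "?S \<subseteq> (\<lambda>l. real (the (w!l)) + (real (\<pi>!j) - real (\<pi>!l)) / real (length w + 1)) ` {..<length w}"
    by force
qed simp

lemma fill_holes_strict_mono: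
  assumes "\<pi>!j < \<pi>!k"
  shows "fill_holes w \<pi> j < fill_holes w \<pi> k"
proof -
  define e where "e = real (length w + 1)"
  define d where "d = (real (\<pi>!k) - real (\<pi>!j)) / e"
  have "0 < d" using assms by (simp add: d_def e_def)
  let ?S = "\<lambda>j. insert (real (\<pi>!j) / e - 1)
     {real a + (real (\<pi>!j) - real (\<pi>!l)) / e | l a. l < length w \<and> w!l = Some a \<and> \<pi>!l \<le> \<pi>!j}"
  have fin: "finite (?S j)" for j
    using finite_fill_holes_candidates[of \<pi> j w] by (simp add: e_def)
  have shift: "s + d \<in> ?S k" if "s \<in> ?S j" for s
    using that assms by (auto simp: d_def diff_divide_distrib) (metis le_trans less_imp_le)+
  have "fill_holes w \<pi> j \<in> ?S j"
    unfolding fill_holes_def e_def by (rule Max_in) (use fin in \<open>auto simp: e_def\<close>)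
  then have "fill_holes w \<pi> j + d \<le> fill_holes w \<pi> k"
    unfolding fill_holes_def[of w \<pi> k] e_def[symmetric] using fin shift by simp
  then show ?thesis using \<open>0 < d\<close> by simp
qed

lemma fill_holes_letter:
  assumes perm: "is_perm (length w) \<pi>" and "distinct_ints w"
    and pos: "\<And>j a. j < length w \<Longrightarrow> w!j = Some a \<Longrightarrow> 0 < a"
    and order: "\<And>j k a b. j < length w \<Longrightarrow> k < length w \<Longrightarrow> w!j = Some a \<Longrightarrow> w!k = Some b \<Longrightarrow>
       a < b \<Longrightarrow> \<pi>!j < \<pi>!k"
    and j: "j < length w" "w!j = Some a"
  shows "fill_holes w \<pi> j = real a"
proof -
  define e where "e = real (length w + 1)"
  have frac: "real (\<pi>!j) / e < 1" "(real (\<pi>!j) - real (\<pi>!l)) / e < 1" if "l < length w" for l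
    using is_perm_nth_range[OF perm j(1)] is_perm_nth_range[OF perm that] by (simp_all add: e_def)
  let ?S = "insert (real (\<pi>!j) / e - 1)
     {real a + (real (\<pi>!j) - real (\<pi>!l)) / e | l a. l < length w \<and> w!l = Some a \<and> \<pi>!l \<le> \<pi>!j}"
  have "s \<le> real a" if "s \<in> ?S" for s
    using that
  proof (elim insertE CollectE exE conjE)
    assume "s = real (\<pi>!j) / e - 1"
    then show ?thesis using frac[OF j(1)] pos[OF j] by linarith
  next
    fix l a' assume l: "s = real a' + (real (\<pi>!j) - real (\<pi>!l)) / e"
      "l < length w" "w!l = Some a'" "\<pi>!l \<le> \<pi>!j"
    show ?thesis
    proof (cases "l = j")
      case False
      then have "\<pi>!l < \<pi>!j" using l is_perm_nth_eq_iff[OF perm l(2) j(1)] by simp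
      then have "\<not> a < a'" using order[OF j(1) l(2) j(2) l(3)] by auto
      moreover have "w!j \<noteq> w!l"
        using \<open>distinct_ints w\<close> j l(2) False unfolding distinct_ints_def
        by (metis option.distinct(1))
      then have "a' \<noteq> a" using j(2) l(3) by auto
      ultimately show ?thesis using l(1) frac(2)[OF l(2)] by simp
    qed (use l j in simp)
  qed
  moreover have "real a \<in> ?S" using j by force
  moreover have "finite ?S" using finite_fill_holes_candidates[of \<pi> j w] by (simp add: e_def)
  ultimately show ?thesis unfolding fill_holes_def e_def[symmetric] by (intro Max_eqI)
qed

lemma covers_if_order_preserving:
  assumes perm: "is_perm (length w) \<pi>" and dist: "distinct_ints w"
    and pos: "\<And>j a. j < length w \<Longrightarrow> w!j = Some a \<Longrightarrow> 0 < a"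
    and order: "\<And>j k a b. j < length w \<Longrightarrow> k < length w \<Longrightarrow> w!j = Some a \<Longrightarrow> w!k = Some b \<Longrightarrow>
       a < b \<Longrightarrow> \<pi>!j < \<pi>!k"
  shows "covers w \<pi>"
proof -
  let ?x = "fill_holes w \<pi>"
  have less_iff: "?x j < ?x k \<longleftrightarrow> \<pi>!j < \<pi>!k" if "j < length w" "k < length w" for j k
    using fill_holes_strict_mono[of \<pi> j k w] fill_holes_strict_mono[of \<pi> k j w]
      is_perm_nth_eq_iff[OF perm that] by (metis linorder_neq_iff order_less_asym)
  have "inj_on ?x {..<length w}"
    by (rule inj_onI) (metis lessThan_iff less_iff order_less_irrefl linorder_neq_iff
        is_perm_nth_eq_iff[OF perm])
  moreover have "length w = length \<pi>" using perm by (simp add: is_perm_def)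
  moreover have "?x j = real a" if "j < length w" "w!j = Some a" for j a
    using perm dist pos order that by (rule fill_holes_letter)
  ultimately show ?thesis
    using less_iff unfolding covers_def by (intro conjI exI[of _ ?x]) auto
qed

lemma covers_unique_given_holes:
  assumes p1: "is_perm (length w) \<pi>" and p2: "is_perm (length w) \<pi>'" and dist: "distinct_ints w"
    and c1: "covers w \<pi>" and c2: "covers w \<pi>'"
    and holes: "\<And>t. t < length w \<Longrightarrow> w!t = None \<Longrightarrow> \<pi>!t = \<pi>'!t"
  shows "\<pi> = \<pi>'"
proof (rule ccontr)
  assume "\<pi> \<noteq> \<pi>'"
  let ?n = "length w"
  have len: "length \<pi> = ?n" "length \<pi>' = ?n" and set: "set \<pi> = set \<pi>'"
    using p1 p2 by (auto simp: is_perm_def)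
  define D where "D = {\<pi>!t | t. t < ?n \<and> \<pi>!t \<noteq> \<pi>'!t}"
  have "\<exists>t<?n. \<pi>!t \<noteq> \<pi>'!t" using \<open>\<pi> \<noteq> \<pi>'\<close> len nth_equalityI by metis
  then have "D \<noteq> {}" unfolding D_def by blast
  moreover have "finite D" unfolding D_def by simp
  ultimately have "Min D \<in> D" by (rule Min_in[rotated])
  have min: "Min D \<le> x" if "x \<in> D" for x using \<open>finite D\<close> that by simp
  have D_iff: "x \<in> D \<longleftrightarrow> (\<exists>t<?n. x = \<pi>!t \<and> \<pi>!t \<noteq> \<pi>'!t)" for x
    unfolding D_def by blast
  obtain j where j: "j < ?n" "\<pi>!j = Min D" "\<pi>!j \<noteq> \<pi>'!j"
    using D_iff[of "Min D"] \<open>Min D \<in> D\<close> by metis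
  have "w!j \<noteq> None" using holes j(1,3) by blast
  then obtain a where a: "w!j = Some a" by blast
  have "\<pi>!j \<in> set \<pi>'" using set len j(1) by (simp flip: set)
  then obtain j' where j': "j' < ?n" "\<pi>'!j' = \<pi>!j" unfolding in_set_conv_nth len by blast
  have "j' \<noteq> j" using j j' by auto
  then have "\<pi>!j' \<noteq> \<pi>!j" using is_perm_nth_eq_iff[OF p1 j'(1) j(1)] by simp
  then have ne': "\<pi>!j' \<noteq> \<pi>'!j'" using j'(2) by simp
  then have "\<pi>!j' \<in> D" using D_iff j'(1) by blast
  then have j'_above: "\<pi>!j < \<pi>!j'"
    using min j(2) \<open>\<pi>!j' \<noteq> \<pi>!j\<close> by (simp add: order_less_le)
  have "w!j' \<noteq> None" using holes j'(1) ne' by blast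
  then obtain b where b: "w!j' = Some b" by blast
  have "w!j \<noteq> w!j'"
    using dist a j(1) j'(1) \<open>j' \<noteq> j\<close> unfolding distinct_ints_def by (metis option.distinct(1))
  then have "a \<noteq> b" using a b by simp
  moreover have "\<not> b < a" using covers_less[OF c1 j'(1) j(1) b a] j'_above by (meson order_less_asym)
  ultimately have "\<pi>'!j < \<pi>'!j'" using covers_less[OF c2 j(1) j'(1) a b] by simp
  then have below: "\<pi>'!j < \<pi>!j" using j'(2) by simp
  have "\<pi>'!j \<in> set \<pi>" using len j(1) by (simp add: set)
  then obtain l where l: "l < ?n" "\<pi>!l = \<pi>'!j" unfolding in_set_conv_nth len by blast
  have "\<pi>!l \<notin> D"
  proof
    assume "\<pi>!l \<in> D"
    then have "\<pi>!j \<le> \<pi>!l" using min j(2) by simp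
    then show False using below l(2) by simp
  qed
  then have "\<pi>!l = \<pi>'!l" using D_iff l(1) by blast
  then have "l = j" using l(2) is_perm_nth_eq_iff[OF p2 l(1) j(1)] by simp
  then show False using l(2) below by simp
qed

section \<open>Patterns fitting windows\<close>

lemma exists_real_between_avoiding:
  fixes L U E :: "real set"
  assumes "finite L" "finite U" "finite E" "\<And>l h. l \<in> L \<Longrightarrow> h \<in> U \<Longrightarrow> l < h"
  shows "\<exists>z. (\<forall>l\<in>L. l < z) \<and> (\<forall>h\<in>U. z < h) \<and> z \<notin> E"
proof -
  define a where "a = (if L = {} then (if U = {} then 0 else Min U - 1) else Max L)"
  define b where "b = (if U = {} then a + 1 else Min U)"
  have "\<forall>l\<in>L. l \<le> a" using assms(1) by (auto simp: a_def)
  moreover have "\<forall>h\<in>U. b \<le> h" using assms(2) by (auto simp: b_def)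
  moreover have "a < b"
    using assms by (cases "L = {}"; cases "U = {}") (auto simp: a_def b_def dest: Min_le[rotated])
  then have "infinite ({a<..<b} - E)" using assms(3) by (simp add: Diff_infinite_finite)
  then obtain z where "z \<in> {a<..<b}" "z \<notin> E" using infinite_imp_nonempty by blast
  ultimately show ?thesis by force
qed

text \<open>Patterns of length \<open>n\<close> are represented by injective functions \<open>{..<n} \<Rightarrow> real\<close>
  rather than by permutations; \<open>fits\<close> is the corresponding form of \<open>covers\<close>.\<close>
definition fits :: "letter list \<Rightarrow> nat \<Rightarrow> nat \<Rightarrow> (nat \<Rightarrow> real) \<Rightarrow> bool" where
  "fits u n i y \<longleftrightarrow>
     (\<forall>j<n. \<forall>k<n. \<forall>a b. u!(i+j) = Some a \<longrightarrow> u!(i+k) = Some b \<longrightarrow> a < b \<longrightarrow> y j < y k)"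

lemma fitsD:
  "fits u n i y \<Longrightarrow> j < n \<Longrightarrow> k < n \<Longrightarrow> u!(i+j) = Some a \<Longrightarrow> u!(i+k) = Some b \<Longrightarrow> a < b \<Longrightarrow>
    y j < y k"
  unfolding fits_def by blast

lemma inj_on_case_nat:
  assumes "inj_on y {..<m}" "z \<notin> y ` {..<m}"
  shows "inj_on (case_nat z y) {..<Suc m}"
  using assms by (auto simp: inj_on_def split: nat.splits)

lemma fits_case_nat_at_hole:
  assumes "u!p = None" "fits u (n-1) (Suc p) y"
  shows "fits u n p (case_nat z y)"
  unfolding fits_def
proof (intro allI impI)
  fix j k a b assume jk: "j < n" "k < n" "u!(p+j) = Some a" "u!(p+k) = Some b" "a < b"
  obtain j' k' where "j = Suc j'" "k = Suc k'"
    using assms(1) jk(3,4) by (cases j; cases k) auto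
  then show "case_nat z y j < case_nat z y k"
    using fitsD[OF assms(2), of j' k' a b] jk by simp
qed

lemma fits_case_nat_before:
  assumes "fits u n (Suc i) y"
  shows "\<exists>z. z \<notin> y ` {..<n-1} \<and> fits u n i (case_nat z y)"
proof -
  define Lo where "Lo = {y k | k b c. k < n-1 \<and> u!i = Some c \<and> u!(Suc i+k) = Some b \<and> b < c}"
  define Up where "Up = {y k | k b c. k < n-1 \<and> u!i = Some c \<and> u!(Suc i+k) = Some b \<and> c < b}"
  have "\<exists>z. (\<forall>l\<in>Lo. l < z) \<and> (\<forall>h\<in>Up. z < h) \<and> z \<notin> y ` {..<n-1}"
  proof (rule exists_real_between_avoiding)
    show "finite Lo" "finite Up" unfolding Lo_def Up_def by auto
    fix l h assume "l \<in> Lo" "h \<in> Up"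
    then show "l < h" unfolding Lo_def Up_def using fitsD[OF assms] by fastforce
  qed auto
  then obtain z where z: "\<forall>l\<in>Lo. l < z" "\<forall>h\<in>Up. z < h" "z \<notin> y ` {..<n-1}" by blast
  have "fits u n i (case_nat z y)"
    unfolding fits_def
  proof (intro allI impI)
    fix j k a b assume jk: "j < n" "k < n" "u!(i+j) = Some a" "u!(i+k) = Some b" "a < b"
    show "case_nat z y j < case_nat z y k"
    proof (cases j; cases k)
      fix k' assume "j = 0" "k = Suc k'"
      then have "y k' \<in> Up" using jk unfolding Up_def by fastforce
      then show ?thesis using z \<open>j = 0\<close> \<open>k = Suc k'\<close> by simp
    next
      fix j' assume "j = Suc j'" "k = 0"
      then have "y j' \<in> Lo" using jk unfolding Lo_def by fastforce
      then show ?thesis using z \<open>j = Suc j'\<close> \<open>k = 0\<close> by simp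
    next
      fix j' k' assume "j = Suc j'" "k = Suc k'"
      then show ?thesis using fitsD[OF assms, of j' k' a b] jk by simp
    qed (use jk in simp)
  qed
  then show ?thesis using z(3) by blast
qed

lemma up_word_unique_covering_window:
  assumes "up_word n u" "is_perm n \<pi>"
  shows "\<exists>!i. i + n \<le> length u \<and> covers (factor u n i) \<pi>"
proof -
  have "card {i. i + n \<le> length u \<and> covers (factor u n i) \<pi>} = 1"
    using assms by (simp add: up_word_def)
  then obtain i0 where "{i. i + n \<le> length u \<and> covers (factor u n i) \<pi>} = {i0}"
    by (rule card_1_singletonE)
  then have "i + n \<le> length u \<and> covers (factor u n i) \<pi> \<longleftrightarrow> i = i0" for i by blast
  then show ?thesis by simp
qed

lemma covers_factor_iff_fits:
  assumes up: "up_word n u" and i: "i + n \<le> length u" and y: "inj_on y {..<n}"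
  shows "covers (factor u n i) (ranks y n) \<longleftrightarrow> fits u n i y"
proof
  assume cov: "covers (factor u n i) (ranks y n)"
  show "fits u n i y"
    unfolding fits_def
  proof (intro allI impI)
    fix j k a b assume jk: "j < n" "k < n" "u!(i+j) = Some a" "u!(i+k) = Some b" "a < b"
    then have "ranks y n ! j < ranks y n ! k"
      using covers_less[OF cov, of j k a b] i by (simp add: length_factor factor_nth)
    then show "y j < y k" using ranks_less_iff jk(1,2) by blast
  qed
next
  assume fits: "fits u n i y"
  show "covers (factor u n i) (ranks y n)"
  proof (rule covers_if_order_preserving)
    show "is_perm (length (factor u n i)) (ranks y n)"
      using is_perm_ranks[OF y] i by (simp add: length_factor)
    show "distinct_ints (factor u n i)" using up i by (simp add: up_word_def)
  next
    fix j a assume "j < length (factor u n i)" "factor u n i ! j = Some a"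
    then have "Some a \<in> set u" using i nth_mem[of "i+j" u] by (simp add: length_factor factor_nth)
    then show "0 < a" using up by (simp add: up_word_def)
  next
    fix j k a b assume "j < length (factor u n i)" "k < length (factor u n i)"
      "factor u n i ! j = Some a" "factor u n i ! k = Some b" "a < b"
    then show "ranks y n ! j < ranks y n ! k"
      using fitsD[OF fits] ranks_less_iff i by (simp add: length_factor factor_nth)
  qed
qed

locale pattern_universal =
  fixes n :: nat and u :: "letter list"
  assumes length_ge: "n \<le> length u"
    and window_letters_distinct: "\<And>i j k a. i + n \<le> length u \<Longrightarrow> j < n \<Longrightarrow> k < n \<Longrightarrow> j \<noteq> k \<Longrightarrow>
       u!(i+j) = Some a \<Longrightarrow> u!(i+k) \<noteq> Some a"
    and unique_fitting_window: "\<And>y. inj_on y {..<n} \<Longrightarrow> \<exists>!i. i + n \<le> length u \<and> fits u n i y"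
begin

lemma fitting_window_exists:
  assumes "inj_on y {..<n}"
  obtains i where "i + n \<le> length u" "fits u n i y"
  using unique_fitting_window[OF assms] by blast

lemma fitting_window_unique:
  "inj_on y {..<n} \<Longrightarrow> i + n \<le> length u \<Longrightarrow> i' + n \<le> length u \<Longrightarrow>
    fits u n i y \<Longrightarrow> fits u n i' y \<Longrightarrow> i = i'"
  using unique_fitting_window by blast

text \<open>Uniqueness rules out every other window: a window fitting \<open>y\<close> other than
  \<open>0\<close> and \<open>p + 1\<close> could be moved one step to the left, where it would compete
  with the window starting at the hole \<open>p\<close>.\<close>
lemma fitting_window_after_hole:
  assumes hole: "u!p = None" "p + n < length u"
    and y: "inj_on y {..<n}" "fits u (n-1) (Suc p) y"
    and i: "i + n \<le> length u" "fits u n i y"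
  shows "i = 0 \<or> i = Suc p"
proof (rule ccontr)
  assume "\<not> (i = 0 \<or> i = Suc p)"
  then obtain i' where i': "i = Suc i'" "i' \<noteq> p" by (cases i) auto
  obtain z where z: "z \<notin> y ` {..<n-1}" "fits u n i' (case_nat z y)"
    using fits_case_nat_before i(2) i'(1) by blast
  have "inj_on y {..<n-1}" using y(1) by (rule inj_on_subset) auto
  then have "inj_on (case_nat z y) {..<Suc (n-1)}" using z(1) by (rule inj_on_case_nat)
  then have "inj_on (case_nat z y) {..<n}" by (rule inj_on_subset) auto
  moreover have "fits u n p (case_nat z y)" using fits_case_nat_at_hole[OF hole(1) y(2)] .
  ultimately have "p = i'" using fitting_window_unique z(2) hole(2) i(1) i'(1) by simp
  then show False using i'(2) by simp
qed

end

lemma up_word_pattern_universal: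
  assumes up: "up_word n u"
  shows "pattern_universal n u"
proof
  show "n \<le> length u" using up by (simp add: up_word_def)
next
  fix i j k a assume h: "i + n \<le> length u" "j < n" "k < n" "j \<noteq> k" "u!(i+j) = Some a"
  have "distinct_ints (factor u n i)" using up h(1) by (simp add: up_word_def)
  then have "\<forall>a<n. \<forall>b<n. a \<noteq> b \<longrightarrow> factor u n i ! a \<noteq> None \<longrightarrow> factor u n i ! a \<noteq> factor u n i ! b"
    using h(1) by (simp add: distinct_ints_def length_factor)
  then have "factor u n i ! j \<noteq> None \<longrightarrow> factor u n i ! j \<noteq> factor u n i ! k"
    using h(2-4) by blast
  then show "u!(i+k) \<noteq> Some a" using h by (simp add: factor_nth)
next
  fix y :: "nat \<Rightarrow> real" assume y: "inj_on y {..<n}"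
  have "\<exists>!i. i + n \<le> length u \<and> covers (factor u n i) (ranks y n)"
    using up is_perm_ranks[OF y] by (rule up_word_unique_covering_window)
  then show "\<exists>!i. i + n \<le> length u \<and> fits u n i y"
    using covers_factor_iff_fits[OF up _ y] by (simp cong: conj_cong)
qed

definition max_letter :: "letter list \<Rightarrow> nat" where
  "max_letter u = Max (insert 0 (Some -` set u))"

lemma letter_le_max_letter: "Some a \<in> set u \<Longrightarrow> a \<le> max_letter u"
  unfolding max_letter_def by (simp add: finite_vimageI)

lemma nth_letter_le_max_letter: "t < length u \<Longrightarrow> u!t = Some a \<Longrightarrow> a \<le> max_letter u"
  by (metis letter_le_max_letter nth_mem)

lemma fits_cong: "(\<And>j. j < n \<Longrightarrow> y j = y' j) \<Longrightarrow> fits u n i y \<longleftrightarrow> fits u n i y'"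
  unfolding fits_def by auto

lemma fits_shorter: "fits u n i y \<Longrightarrow> m \<le> n \<Longrightarrow> fits u m i y"
  unfolding fits_def by auto

lemma fits_fun_upd_last_iff:
  assumes "0 < n" "u!(i + (n-1)) = Some c"
  shows "fits u n i (y(n-1 := v)) \<longleftrightarrow> fits u (n-1) i y \<and>
    (\<forall>j<n-1. \<forall>b. u!(i+j) = Some b \<longrightarrow> (b < c \<longrightarrow> y j < v) \<and> (c < b \<longrightarrow> v < y j))"
    (is "?fits \<longleftrightarrow> ?prefix \<and> ?last")
proof
  assume fits: ?fits
  have "fits u (n-1) i (y(n-1 := v))" using fits by (rule fits_shorter) simp
  moreover have "fits u (n-1) i (y(n-1 := v)) \<longleftrightarrow> ?prefix" by (rule fits_cong) simp
  ultimately have ?prefix by blast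
  moreover have ?last
  proof (intro allI impI conjI)
    fix j b assume j: "j < n-1" "u!(i+j) = Some b"
    show "y j < v" if "b < c" using fitsD[OF fits, of j "n-1" b c] j that assms by simp
    show "v < y j" if "c < b" using fitsD[OF fits, of "n-1" j c b] j that assms by simp
  qed
  ultimately show "?prefix \<and> ?last" ..
next
  assume "?prefix \<and> ?last"
  then show ?fits
    unfolding fits_def using assms
    by (auto simp: less_Suc_eq dest: fitsD[of u "n-1" i y])
qed

lemma fits_fun_upd_last_hole:
  assumes "u!(i + (n-1)) = None"
  shows "fits u n i (y(n-1 := v)) \<longleftrightarrow> fits u (n-1) i y"
  unfolding fits_def using assms by (auto simp: less_Suc_eq)

definition mirror_letters :: "nat \<Rightarrow> letter list \<Rightarrow> letter list" where
  "mirror_letters K u = map (map_option (\<lambda>a. K - a)) u"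

lemma length_mirror_letters [simp]: "length (mirror_letters K u) = length u"
  by (simp add: mirror_letters_def)

lemma nth_mirror_letters:
  "t < length u \<Longrightarrow> mirror_letters K u ! t = map_option (\<lambda>a. K - a) (u!t)"
  by (simp add: mirror_letters_def)

lemma fits_mirror_letters_iff:
  assumes K: "\<And>a. Some a \<in> set u \<Longrightarrow> a < K" and i: "i + n \<le> length u"
  shows "fits (mirror_letters K u) n i y \<longleftrightarrow> fits u n i (\<lambda>j. - y j)"
proof -
  have nth: "mirror_letters K u ! (i+j) = map_option (\<lambda>a. K - a) (u!(i+j))" if "j < n" for j
    using that i by (simp add: nth_mirror_letters)
  have below: "a < K" if "j < n" "u!(i+j) = Some a" for j a
    using that i K nth_mem[of "i+j" u] by simp
  show ?thesis
    unfolding fits_def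
  proof (intro iffI allI impI)
    fix j k a b assume fits: "\<forall>j<n. \<forall>k<n. \<forall>a b. mirror_letters K u ! (i+j) = Some a \<longrightarrow>
        mirror_letters K u ! (i+k) = Some b \<longrightarrow> a < b \<longrightarrow> y j < y k"
      and jk: "j < n" "k < n" "u!(i+j) = Some a" "u!(i+k) = Some b" "a < b"
    have "K - b < K - a" using jk below[OF jk(2,4)] by simp
    then have "y k < y j" using fits nth jk by simp
    then show "- y j < - y k" by simp
  next
    fix j k a b assume fits: "\<forall>j<n. \<forall>k<n. \<forall>a b. u!(i+j) = Some a \<longrightarrow> u!(i+k) = Some b \<longrightarrow>
        a < b \<longrightarrow> - y j < - y k"
      and jk: "j < n" "k < n" "mirror_letters K u ! (i+j) = Some a"
        "mirror_letters K u ! (i+k) = Some b" "a < b"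
    obtain a' b' where "u!(i+j) = Some a'" "a = K - a'" "u!(i+k) = Some b'" "b = K - b'"
      using jk(3,4) nth[OF jk(1)] nth[OF jk(2)] by auto
    moreover from this have "b' < a'" using jk below[of j a'] below[of k b'] by simp
    ultimately have "- y k < - y j" using fits jk(1,2) by blast
    then show "y j < y k" by simp
  qed
qed

lemma fits_rev_iff:
  assumes "i + n \<le> length u"
  shows "fits (rev u) n i y \<longleftrightarrow> fits u n (length u - n - i) (\<lambda>j. y (n - 1 - j))"
proof -
  have nth: "rev u ! (i+j) = u ! (length u - n - i + (n - 1 - j))" if "j < n" for j
    using that assms by (simp add: rev_nth)
  show ?thesis
    unfolding fits_def
  proof (intro iffI allI impI)
    fix j k a b assume fits: "\<forall>j<n. \<forall>k<n. \<forall>a b. rev u ! (i+j) = Some a \<longrightarrow>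
        rev u ! (i+k) = Some b \<longrightarrow> a < b \<longrightarrow> y j < y k"
      and jk: "j < n" "k < n" "u ! (length u - n - i + j) = Some a"
        "u ! (length u - n - i + k) = Some b" "a < b"
    then show "y (n - 1 - j) < y (n - 1 - k)"
      using nth[of "n - 1 - j"] nth[of "n - 1 - k"] by simp
  next
    fix j k a b assume fits: "\<forall>j<n. \<forall>k<n. \<forall>a b. u ! (length u - n - i + j) = Some a \<longrightarrow>
        u ! (length u - n - i + k) = Some b \<longrightarrow> a < b \<longrightarrow> y (n - 1 - j) < y (n - 1 - k)"
      and jk: "j < n" "k < n" "rev u ! (i+j) = Some a" "rev u ! (i+k) = Some b" "a < b"
    have rev_jk: "n - 1 - j < n" "n - 1 - k < n" using jk(1,2) by auto
    have "y (n - 1 - (n - 1 - j)) < y (n - 1 - (n - 1 - k))"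
      using fits[rule_format, OF rev_jk, of a b] jk nth[OF jk(1)] nth[OF jk(2)] by simp
    then show "y j < y k" using jk(1,2) by simp
  qed
qed

context pattern_universal
begin

lemma pattern_universal_mirror_letters:
  assumes K: "\<And>a. Some a \<in> set u \<Longrightarrow> a < K"
  shows "pattern_universal n (mirror_letters K u)"
proof
  show "n \<le> length (mirror_letters K u)" using length_ge by simp
next
  fix i j k a assume h: "i + n \<le> length (mirror_letters K u)" "j < n" "k < n" "j \<noteq> k"
    "mirror_letters K u ! (i+j) = Some a"
  obtain a' where a': "u!(i+j) = Some a'" "a = K - a'"
    using h by (auto simp: nth_mirror_letters)
  show "mirror_letters K u ! (i+k) \<noteq> Some a"
  proof
    assume "mirror_letters K u ! (i+k) = Some a"
    then obtain b' where b': "u!(i+k) = Some b'" "a = K - b'"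
      using h by (auto simp: nth_mirror_letters)
    have "a' < K" "b' < K" using K a'(1) b'(1) h(1-3) nth_mem[of "i+j" u] nth_mem[of "i+k" u]
      by simp_all
    then have "a' = b'" using a'(2) b'(2) by simp
    then show False using window_letters_distinct[of i j k a'] h a'(1) b'(1) by simp
  qed
next
  fix y :: "nat \<Rightarrow> real" assume "inj_on y {..<n}"
  then have "inj_on (\<lambda>j. - y j) {..<n}" by (auto simp: inj_on_def)
  then have "\<exists>!i. i + n \<le> length u \<and> fits u n i (\<lambda>j. - y j)" by (rule unique_fitting_window)
  then show "\<exists>!i. i + n \<le> length (mirror_letters K u) \<and> fits (mirror_letters K u) n i y"
    using fits_mirror_letters_iff[OF K] by (simp cong: conj_cong)
qed

lemma pattern_universal_rev: "pattern_universal n (rev u)"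
proof
  show "n \<le> length (rev u)" using length_ge by simp
next
  fix i j k a assume h: "i + n \<le> length (rev u)" "j < n" "k < n" "j \<noteq> k" "rev u ! (i+j) = Some a"
  then show "rev u ! (i+k) \<noteq> Some a"
    using window_letters_distinct[of "length u - n - i" "n - 1 - j" "n - 1 - k" a]
    by (simp add: rev_nth)
next
  fix y :: "nat \<Rightarrow> real" assume y: "inj_on y {..<n}"
  have inj: "inj_on (\<lambda>j. y (n - 1 - j)) {..<n}"
  proof (rule inj_onI)
    fix j k assume jk: "j \<in> {..<n}" "k \<in> {..<n}" "y (n - 1 - j) = y (n - 1 - k)"
    then have "n - 1 - j = n - 1 - k" using inj_onD[OF y] by auto
    then show "j = k" using jk(1,2) by auto
  qed
  obtain i0 where i0: "i0 + n \<le> length u" "fits u n i0 (\<lambda>j. y (n - 1 - j))"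
    using fitting_window_exists[OF inj] .
  show "\<exists>!i. i + n \<le> length (rev u) \<and> fits (rev u) n i y"
  proof (rule ex1I[of _ "length u - n - i0"])
    show "length u - n - i0 + n \<le> length (rev u) \<and> fits (rev u) n (length u - n - i0) y"
      using i0 fits_rev_iff[of "length u - n - i0" n u y] by simp
  next
    fix i assume "i + n \<le> length (rev u) \<and> fits (rev u) n i y"
    then have i: "i + n \<le> length u" "fits u n (length u - n - i) (\<lambda>j. y (n - 1 - j))"
      using fits_rev_iff by auto
    then have "length u - n - i = i0" using fitting_window_unique[OF inj _ i0(1)] i0(2) by simp
    then show "i = length u - n - i0" using i(1) by simp
  qed
qed

end

section \<open>A hole followed by a letter\<close>

lemma count_holes_ge_if_one_letter:
  assumes "m \<le> length u" and one: "\<And>j k. j < m \<Longrightarrow> k < m \<Longrightarrow> u!j \<noteq> None \<Longrightarrow> u!k \<noteq> None \<Longrightarrow> j = k"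
  shows "m \<le> count_list u None + 1"
proof -
  let ?w = "take m u"
  have split: "count_list xs None + length (filter (\<lambda>x. x \<noteq> None) xs) = length xs"
    for xs :: "'a option list"
    by (induction xs) auto
  have "card {j. j < length ?w \<and> ?w!j \<noteq> None} \<le> 1"
    using one assms(1) by (auto simp: card_le_Suc0_iff_eq)
  then have "length (filter (\<lambda>x. x \<noteq> None) ?w) \<le> 1" by (simp add: length_filter_conv_card)
  moreover have "count_list ?w None \<le> count_list u None"
    using count_list_append[of ?w "drop m u" None] by simp
  moreover have "length ?w = m" using assms(1) by simp
  ultimately show ?thesis using split[of ?w] by linarith
qed

locale hole_then_letter = pattern_universal +
  fixes p c :: nat
  assumes hole: "u!p = None" and window_after_hole: "p + n < length u"
    and two_le_n: "2 \<le> n" and last_letter: "u!(p+n) = Some c"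
begin

definition tau :: "nat \<Rightarrow> real" where
  "tau j = (case u!(Suc p + j) of Some a \<Rightarrow> real a | None \<Rightarrow> real (max_letter u) + 1 + real j)"

lemma last_letter_after_hole: "u!(Suc p + (n-1)) = Some c"
  using last_letter two_le_n by (simp add: add.commute add.left_commute)

lemma tau_letter: "u!(Suc p + j) = Some a \<Longrightarrow> tau j = real a"
  by (simp add: tau_def)

lemma tau_hole: "j < n \<Longrightarrow> u!(Suc p + j) = None \<Longrightarrow> real (max_letter u) < tau j"
  by (simp add: tau_def)

lemma letter_le_max_after_hole: "j < n \<Longrightarrow> u!(Suc p + j) = Some a \<Longrightarrow> a \<le> max_letter u"
  using window_after_hole by (intro nth_letter_le_max_letter) auto

lemma letter_after_hole_ne_last:
  assumes "j < n-1" "u!(Suc p + j) = Some b"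
  shows "b \<noteq> c"
proof -
  have "u!(Suc p + (n-1)) \<noteq> Some b"
    using assms two_le_n window_after_hole by (intro window_letters_distinct) auto
  then show ?thesis using last_letter_after_hole by auto
qed

lemma tau_inj: "inj_on tau {..<n-1}"
proof (rule inj_onI)
  fix j k assume jk: "j \<in> {..<n-1}" "k \<in> {..<n-1}" "tau j = tau k"
  show "j = k"
  proof (cases "u!(Suc p + j)"; cases "u!(Suc p + k)")
    fix a b assume ab: "u!(Suc p + j) = Some a" "u!(Suc p + k) = Some b"
    then have "a = b" using jk(3) by (simp add: tau_def)
    show ?thesis
    proof (rule ccontr)
      assume "j \<noteq> k"
      then have "u!(Suc p + k) \<noteq> Some a"
        using jk(1,2) ab(1) window_after_hole by (intro window_letters_distinct) auto
      then show False using ab(2) \<open>a = b\<close> by simp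
    qed
  next
    fix a assume "u!(Suc p + j) = None" "u!(Suc p + k) = Some a"
    moreover have "a \<le> max_letter u" using jk(2) calculation(2) by (intro letter_le_max_after_hole) auto
    ultimately show ?thesis using jk(3) by (simp add: tau_def)
  next
    fix a assume "u!(Suc p + j) = Some a" "u!(Suc p + k) = None"
    moreover have "a \<le> max_letter u" using jk(1) calculation(1) by (intro letter_le_max_after_hole) auto
    ultimately show ?thesis using jk(3) by (simp add: tau_def)
  qed (use jk in \<open>simp add: tau_def\<close>)
qed

lemma fits_tau: "fits u (n-1) (Suc p) tau"
  unfolding fits_def by (simp add: tau_def)

lemma inj_on_tau_upd: "v \<notin> tau ` {..<n-1} \<Longrightarrow> inj_on (tau(n-1 := v)) {..<n}"
  using tau_inj two_le_n by (auto simp: inj_on_def)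

lemma fits_zero_iff_not_fits_after_hole:
  assumes "v \<notin> tau ` {..<n-1}"
  shows "fits u n 0 (tau(n-1 := v)) \<longleftrightarrow> \<not> fits u n (Suc p) (tau(n-1 := v))"
proof -
  note inj = inj_on_tau_upd[OF assms]
  obtain i where i: "i + n \<le> length u" "fits u n i (tau(n-1 := v))"
    using fitting_window_exists[OF inj] .
  have "fits u (n-1) (Suc p) (tau(n-1 := v))"
    using fits_tau by (subst fits_cong) auto
  then have "i = 0 \<or> i = Suc p"
    using fitting_window_after_hole[OF hole window_after_hole inj _ i] by blast
  moreover have "\<not> (fits u n 0 (tau(n-1 := v)) \<and> fits u n (Suc p) (tau(n-1 := v)))"
    using fitting_window_unique[OF inj, of 0 "Suc p"] length_ge window_after_hole by auto
  ultimately show ?thesis using i by auto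
qed

lemma fits_after_hole_iff:
  "fits u n (Suc p) (tau(n-1 := v)) \<longleftrightarrow>
    (\<forall>j<n-1. \<forall>b. u!(Suc p + j) = Some b \<longrightarrow> (b < c \<longrightarrow> tau j < v) \<and> (c < b \<longrightarrow> v < tau j))"
  using fits_fun_upd_last_iff[OF _ last_letter_after_hole] two_le_n fits_tau by simp

lemma fits_zero_iff:
  "fits u n 0 (tau(n-1 := v)) \<longleftrightarrow> fits u (n-1) 0 tau \<and>
    (\<forall>c0 j b. u!(n-1) = Some c0 \<longrightarrow> j < n-1 \<longrightarrow> u!j = Some b \<longrightarrow>
       (b < c0 \<longrightarrow> tau j < v) \<and> (c0 < b \<longrightarrow> v < tau j))"
proof (cases "u!(n-1)")
  case None
  then show ?thesis using fits_fun_upd_last_hole[of u 0 n] by simp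
next
  case (Some c0)
  then show ?thesis using fits_fun_upd_last_iff[of n u 0 c0] two_le_n by auto
qed

context
  fixes g b :: nat
  assumes larger: "g < n-1" "u!(Suc p + g) = Some b" "c < b"
begin

lemma fits_zero_above_tau:
  assumes "\<forall>t\<in>tau ` {..<n-1}. t < v"
  shows "fits u n 0 (tau(n-1 := v))"
proof -
  have "v \<notin> tau ` {..<n-1}" using assms by blast
  moreover have "\<not> fits u n (Suc p) (tau(n-1 := v))"
  proof
    assume "fits u n (Suc p) (tau(n-1 := v))"
    then have "v < tau g" using larger unfolding fits_after_hole_iff by blast
    moreover have "tau g < v" using assms larger(1) by simp
    ultimately show False by simp
  qed
  ultimately show ?thesis using fits_zero_iff_not_fits_after_hole by blast
qed

lemma exists_above_tau: "\<exists>v. \<forall>t\<in>tau ` {..<n-1}. t < v"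
  using exists_real_between_avoiding[of "tau ` {..<n-1}" "{}" "{}"] by auto

lemma fits_zero_tau: "fits u (n-1) 0 tau"
  using fits_zero_above_tau exists_above_tau fits_zero_iff by blast

lemma prefix_letter_below_last:
  assumes "u!(n-1) = Some c0" "j < n-1" "u!j = Some a"
  shows "a < c0"
proof -
  obtain v where v: "\<forall>t\<in>tau ` {..<n-1}. t < v" using exists_above_tau by blast
  have "c0 < a \<longrightarrow> v < tau j"
    using fits_zero_above_tau[OF v] assms unfolding fits_zero_iff by blast
  moreover have "tau j < v" using v assms(2) by simp
  ultimately have "\<not> c0 < a" by auto
  moreover have "u!(0 + (n-1)) \<noteq> Some a"
    using assms two_le_n length_ge by (intro window_letters_distinct) auto
  ultimately show ?thesis using assms(1) by auto
qed

lemma larger_after_hole_not_below_prefix_letter: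
  assumes "u!(n-1) = Some c0" "l < n-1" "u!l = Some a"
    and "g' < n-1" "u!(Suc p + g') = Some b'" "c < b'"
  shows "\<not> tau g' < tau l"
proof
  assume below: "tau g' < tau l"
  have "{tau j | j. j < n-1 \<and> tau j < tau l} \<subseteq> tau ` {..<n-1}" by blast
  then have "finite {tau j | j. j < n-1 \<and> tau j < tau l}" by (rule finite_subset) simp
  then have "\<exists>v. (\<forall>t\<in>{tau j | j. j < n-1 \<and> tau j < tau l}. t < v) \<and> (\<forall>t\<in>{tau l}. v < t) \<and>
      v \<notin> tau ` {..<n-1}"
    by (intro exists_real_between_avoiding) auto
  then obtain v where v: "\<forall>t\<in>{tau j | j. j < n-1 \<and> tau j < tau l}. t < v" "v < tau l"
      "v \<notin> tau ` {..<n-1}"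
    by auto
  have "\<not> fits u n 0 (tau(n-1 := v))"
  proof
    assume "fits u n 0 (tau(n-1 := v))"
    then have "tau l < v"
      using assms(1-3) prefix_letter_below_last[OF assms(1-3)] unfolding fits_zero_iff by blast
    then show False using v(2) by simp
  qed
  then have "fits u n (Suc p) (tau(n-1 := v))"
    using fits_zero_iff_not_fits_after_hole v(3) by blast
  then have "v < tau g'" using fits_after_hole_iff assms(4-6) by blast
  moreover have "tau g' < v" using v(1) below assms(4) by blast
  ultimately show False by simp
qed

text \<open>A last value just below the \<open>tau\<close>-values of the letters exceeding \<open>c\<close> makes the
  window after the hole fit, so window \<open>0\<close> does not fit; the only possible obstruction
  is a prefix letter of window \<open>0\<close> at a position carrying such a letter.\<close>
lemma common_letter_position:
  obtains c0 l a b' where "u!(n-1) = Some c0" "l < n-1" "u!l = Some a"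
    "u!(Suc p + l) = Some b'" "c < b'"
proof -
  define Lo where "Lo = {tau j | j. j < n-1 \<and>
    (\<forall>g'<n-1. \<forall>b'. u!(Suc p + g') = Some b' \<longrightarrow> c < b' \<longrightarrow> tau j < tau g')}"
  define Up where "Up = {tau g' | g' b'. g' < n-1 \<and> u!(Suc p + g') = Some b' \<and> c < b'}"
  have "finite Lo" "finite Up" unfolding Lo_def Up_def by auto
  moreover have "l < h" if "l \<in> Lo" "h \<in> Up" for l h
    using that unfolding Lo_def Up_def by blast
  ultimately obtain v where v: "\<forall>t\<in>Lo. t < v" "\<forall>t\<in>Up. v < t" "v \<notin> tau ` {..<n-1}"
    using exists_real_between_avoiding[of Lo Up "tau ` {..<n-1}"] by blast
  have "fits u n (Suc p) (tau(n-1 := v))"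
    unfolding fits_after_hole_iff
  proof (intro allI impI conjI)
    fix j b' assume j: "j < n-1" "u!(Suc p + j) = Some b'"
    show "tau j < v" if smaller: "b' < c"
    proof -
      have "tau j < tau g'" if "g' < n-1" "u!(Suc p + g') = Some b''" "c < b''" for g' b''
        using smaller that(3) by (intro fitsD[OF fits_tau j(1) that(1) j(2) that(2)]) simp
      then have "tau j \<in> Lo" unfolding Lo_def using j(1) by blast
      then show ?thesis using v(1) by blast
    qed
    show "v < tau j" if "c < b'" using v(2) j that unfolding Up_def by blast
  qed
  then have "\<not> fits u n 0 (tau(n-1 := v))"
    using fits_zero_iff_not_fits_after_hole v(3) by blast
  then obtain c0 l a where l: "u!(n-1) = Some c0" "l < n-1" "u!l = Some a"
      "\<not> ((a < c0 \<longrightarrow> tau l < v) \<and> (c0 < a \<longrightarrow> v < tau l))"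
    using fits_zero_iff fits_zero_tau by blast
  have "v \<noteq> tau l" using v(3) l(2) by auto
  then have "v < tau l" using l(4) prefix_letter_below_last[OF l(1-3)] by auto
  then have "tau l \<notin> Lo" using v(1) by (meson order_less_asym)
  then obtain g' b' where g': "g' < n-1" "u!(Suc p + g') = Some b'" "c < b'" "\<not> tau l < tau g'"
    unfolding Lo_def using l(2) by blast
  then have "tau g' = tau l"
    using larger_after_hole_not_below_prefix_letter[OF l(1-3) g'(1-3)] by simp
  then have "g' = l" using inj_onD[OF tau_inj] g'(1) l(2) by simp
  then show thesis using that l(1-3) g'(2,3) by blast
qed

lemma no_smaller_letter_after_hole:
  assumes "j < n-1" "u!(Suc p + j) = Some b'"
  shows "c < b'"
proof -
  obtain c0 l a where l: "u!(n-1) = Some c0" "l < n-1" "u!l = Some a"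
    using common_letter_position by metis
  obtain v where v: "\<forall>t\<in>tau ` {..<n-1}. v < t" "v \<notin> tau ` {..<n-1}"
    using exists_real_between_avoiding[of "{}" "tau ` {..<n-1}" "tau ` {..<n-1}"] by auto
  have not_zero: "\<not> fits u n 0 (tau(n-1 := v))"
  proof
    assume "fits u n 0 (tau(n-1 := v))"
    then have "tau l < v" using l prefix_letter_below_last[OF l] unfolding fits_zero_iff by blast
    then show False using v(1) l(2) by (meson imageI lessThan_iff order_less_asym)
  qed
  have "\<not> b' < c"
  proof
    assume "b' < c"
    then have "fits u n (Suc p) (tau(n-1 := v)) \<Longrightarrow> tau j < v"
      using assms unfolding fits_after_hole_iff by blast
    moreover have "v < tau j" using v(1) assms(1) by simp
    ultimately show False using not_zero fits_zero_iff_not_fits_after_hole v(2) by auto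
  qed
  then show ?thesis using letter_after_hole_ne_last[OF assms] by simp
qed

lemma prefix_letter_unique_of_larger:
  assumes "j < n-1" "k < n-1" "u!j \<noteq> None" "u!k \<noteq> None"
  shows "j = k"
proof -
  obtain c0 l a b' where l: "u!(n-1) = Some c0" "l < n-1" "u!l = Some a"
      "u!(Suc p + l) = Some b'" "c < b'"
    using common_letter_position by metis
  have "j = l" if j: "j < n-1" "u!j = Some a'" for j a'
  proof (rule ccontr)
    assume "j \<noteq> l"
    have "tau l \<le> real (max_letter u)"
      using tau_letter[OF l(4)] letter_le_max_after_hole[of l b'] l(2,4) by simp
    show False
    proof (cases "u!(Suc p + j)")
      case None
      moreover have "j < n" using j(1) by simp
      ultimately have "tau l < tau j" using tau_hole[of j] \<open>tau l \<le> _\<close> by simp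
      then show False using larger_after_hole_not_below_prefix_letter[OF l(1) j l(2,4,5)] by blast
    next
      case (Some b'')
      then have "c < b''" using no_smaller_letter_after_hole j(1) by blast
      have "tau j \<noteq> tau l" using inj_onD[OF tau_inj] j(1) l(2) \<open>j \<noteq> l\<close> by auto
      then consider "tau j < tau l" | "tau l < tau j" by linarith
      then show False
      proof cases
        case 1
        then show False
          using larger_after_hole_not_below_prefix_letter[OF l(1-3) j(1) Some \<open>c < b''\<close>] by blast
      next
        case 2
        then show False
          using larger_after_hole_not_below_prefix_letter[OF l(1) j l(2,4,5)] by blast
      qed
    qed
  qed
  then show ?thesis using assms by blast
qed

end


text \<open>Otherwise the windows at \<open>p\<close> and \<open>p + 1\<close> would both fit every pattern.\<close>
lemma exists_letter_after_hole: "\<exists>g<n-1. u!(Suc p + g) \<noteq> None"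
proof (rule ccontr)
  assume "\<not> (\<exists>g<n-1. u!(Suc p + g) \<noteq> None)"
  then have holes: "u!(Suc p + t) = None" if "t < n-1" for t using that by blast
  have "fits u n p real"
    unfolding fits_def
  proof (intro allI impI)
    fix j k a b assume "j < n" "u!(p+j) = Some a"
    moreover have "u!(p+j) = None" if "j < n"
      using hole holes[of "j-1"] that by (cases j) auto
    ultimately show "real j < real k" by simp
  qed
  moreover have "fits u n (Suc p) real"
    unfolding fits_def
  proof (intro allI impI)
    fix j k a b assume jk: "j < n" "k < n" "u!(Suc p + j) = Some a" "u!(Suc p + k) = Some b" "a < b"
    have "\<not> j < n-1" "\<not> k < n-1" using holes[of j] holes[of k] jk(3,4) by auto
    then have "j = n-1" "k = n-1" using jk(1,2) by auto
    then show "real j < real k" using jk by simp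
  qed
  ultimately have "p = Suc p"
    using fitting_window_unique[of real p "Suc p"] window_after_hole by (simp add: inj_on_def)
  then show False by simp
qed

lemma prefix_letter_unique_of_smaller:
  assumes g: "g < n-1" "u!(Suc p + g) = Some b" "b < c"
    and "j < n-1" "k < n-1" "u!j \<noteq> None" "u!k \<noteq> None"
  shows "j = k"
proof -
  define K where "K = Suc (max_letter u)"
  have K: "a < K" if "Some a \<in> set u" for a
    using letter_le_max_letter[OF that] by (simp add: K_def)
  have nth: "mirror_letters K u ! t = map_option (\<lambda>a. K - a) (u!t)" if "t < length u" for t
    using that by (rule nth_mirror_letters)
  have "Some c \<in> set u" using nth_mem[OF window_after_hole] last_letter by simp
  then have "c < K" by (rule K)
  have "hole_then_letter n (mirror_letters K u) p (K - c)"
  proof (intro hole_then_letter.intro hole_then_letter_axioms.intro)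
    show "pattern_universal n (mirror_letters K u)" by (rule pattern_universal_mirror_letters[OF K])
  qed (use hole window_after_hole two_le_n last_letter nth in simp_all)
  then interpret mirror: hole_then_letter n "mirror_letters K u" p "K - c" .
  have "mirror_letters K u ! (Suc p + g) = Some (K - b)"
    using g window_after_hole nth by simp
  moreover have "K - c < K - b" using g(3) \<open>c < K\<close> by simp
  moreover have "mirror_letters K u ! t \<noteq> None \<longleftrightarrow> u!t \<noteq> None" if "t < n-1" for t
    using that length_ge nth by simp
  ultimately show ?thesis
    using mirror.prefix_letter_unique_of_larger[OF g(1)] assms(4-) by blast
qed

lemma prefix_letter_unique:
  assumes "j < n-1" "k < n-1" "u!j \<noteq> None" "u!k \<noteq> None"
  shows "j = k"
proof -
  obtain g b where g: "g < n-1" "u!(Suc p + g) = Some b" using exists_letter_after_hole by blast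
  then consider "c < b" | "b < c" using letter_after_hole_ne_last by (meson linorder_neqE_nat)
  then show ?thesis
  proof cases
    case 1
    then show ?thesis using prefix_letter_unique_of_larger[OF g 1] assms by blast
  next
    case 2
    then show ?thesis using prefix_letter_unique_of_smaller[OF g 2] assms by blast
  qed
qed

end

context pattern_universal
begin

lemma hole_then_letter_bound:
  assumes "u!p = None" "p + n < length u" "u!(p+n) = Some c"
  shows "n \<le> count_list u None + 2"
proof (cases "2 \<le> n")
  case True
  interpret hole_then_letter n u p c
    using assms True by unfold_locales
  have "n - 1 \<le> count_list u None + 1"
    using length_ge prefix_letter_unique by (intro count_holes_ge_if_one_letter) auto
  then show ?thesis by simp
qed simp

lemma letter_then_hole_bound:
  assumes "u!p = None" "p < length u" "n \<le> p" "u!(p-n) = Some c"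
  shows "n \<le> count_list u None + 2"
proof -
  interpret rev: pattern_universal n "rev u" by (rule pattern_universal_rev)
  have "rev u ! (length u - 1 - p) = None" "rev u ! (length u - 1 - p + n) = Some c"
    using assms by (simp_all add: rev_nth Suc_diff_Suc)
  moreover have "length u - 1 - p + n < length (rev u)" using assms(2,3) by simp
  ultimately show ?thesis using rev.hole_then_letter_bound by simp
qed

lemma holes_periodic:
  assumes "count_list u None + 2 < n" "i + n < length u"
  shows "u!i = None \<longleftrightarrow> u!(i+n) = None"
proof (cases "u!i"; cases "u!(i+n)")
  fix a assume "u!i = None" "u!(i+n) = Some a"
  then show ?thesis using hole_then_letter_bound[of i a] assms by simp
next
  fix a assume "u!i = Some a" "u!(i+n) = None"
  then show ?thesis using letter_then_hole_bound[of "i+n" a] assms by simp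
qed simp_all

end

section \<open>Counting permutations\<close>

lemma factor_snoc_eq_Cons_factor:
  assumes "i + n < length u"
  shows "factor u n i @ [u!(i+n)] = u!i # factor u n (Suc i)"
proof -
  have "factor u n i @ [u!(i+n)] = take (Suc n) (drop i u)"
    using assms by (simp add: factor_def take_Suc_conv_app_nth)
  also have "\<dots> = u!i # factor u n (Suc i)"
    using assms by (simp add: factor_def Cons_nth_drop_Suc[symmetric])
  finally show ?thesis .
qed

lemma count_holes_factor_periodic:
  assumes periodic: "\<And>i. i + n < length u \<Longrightarrow> u!i = None \<longleftrightarrow> u!(i+n) = None"
    and "i + n \<le> length u"
  shows "count_list (factor u n i) None = count_list (factor u n 0) None"
  using assms(2)
proof (induction i)
  case (Suc i)
  then have "count_list (factor u n i @ [u!(i+n)]) None = count_list (u!i # factor u n (Suc i)) None"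
    by (simp add: factor_snoc_eq_Cons_factor)
  then have "count_list (factor u n (Suc i)) None = count_list (factor u n i) None"
    using periodic[of i] Suc.prems by (auto split: if_splits)
  then show ?case using Suc by simp
qed simp

lemma count_holes_ge_blocks:
  assumes windows: "\<And>i. i + n \<le> length u \<Longrightarrow> count_list (factor u n i) None = k"
  shows "(length u div n) * k \<le> count_list u None"
proof -
  have "count_list (take (b * n) u) None = b * k" if "b * n \<le> length u" for b
    using that
  proof (induction b)
    case (Suc b)
    have "Suc b * n = b * n + n" by simp
    then have "take (Suc b * n) u = take (b * n) u @ factor u n (b * n)"
      by (simp only: take_add factor_def)
    then show ?case using Suc windows[of "b * n"] by (simp add: add.commute)
  qed simp
  moreover have "length u div n * n \<le> length u" by simp
  moreover have "count_list (take m u) None \<le> count_list u None" for m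
    using count_list_append[of "take m u" "drop m u" None] by simp
  ultimately show ?thesis by metis
qed

lemma exists_window_with_hole:
  assumes "None \<in> set u" "n \<le> length u" "0 < n"
  obtains i where "i + n \<le> length u" "None \<in> set (factor u n i)"
proof -
  obtain p where p: "p < length u" "u!p = None" using assms(1) by (metis in_set_conv_nth)
  define i where "i = min p (length u - n)"
  have i: "i + n \<le> length u" "p - i < n" "i \<le> p" using p assms(2,3) by (auto simp: i_def)
  then have "factor u n i ! (p - i) = None" using p(2) by (simp add: factor_nth)
  then have "None \<in> set (factor u n i)"
    using i nth_mem[of "p - i" "factor u n i"] by (simp add: length_factor)
  then show thesis using that i(1) by blast
qed

lemma length_hole_positions:
  "length (filter (\<lambda>t. w!t = None) [0..<length w]) = count_list w None"
proof -
  have "count_list w None = card {t. t < length w \<and> None = w!t}"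
    by (simp add: count_list_eq_length_filter length_filter_conv_card)
  also have "{t. t < length w \<and> None = w!t} = {t. t < length w \<and> w!t = None}" by auto
  also have "card \<dots> = length (filter (\<lambda>t. w!t = None) [0..<length w])"
    by (simp add: length_filter_conv_card cong: conj_cong)
  finally show ?thesis by simp
qed

lemma card_perms: "card {\<pi>. is_perm n \<pi>} = fact n"
proof -
  have "card {\<pi>. is_perm n \<pi>} = card {xs. length xs = n \<and> distinct xs \<and> set xs \<subseteq> {1..n}}"
    by (simp add: is_perm_iff_subset)
  also have "\<dots> = \<Prod>{1..n}" by (subst card_lists_distinct_length_eq) simp_all
  finally show ?thesis by (simp add: fact_prod)
qed

text \<open>A permutation is determined by the window covering it together with its values
  at the holes of that window.\<close>
lemma fact_le_windows_mult_power:
  assumes up: "up_word n u"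
    and windows: "\<And>i. i + n \<le> length u \<Longrightarrow> count_list (factor u n i) None = k"
  shows "fact n \<le> (length u - n + 1) * n ^ k"
proof -
  let ?P = "{\<pi>. is_perm n \<pi>}"
  let ?covering = "\<lambda>\<pi> i. i + n \<le> length u \<and> covers (factor u n i) \<pi>"
  define win where "win \<pi> = (THE i. ?covering \<pi> i)" for \<pi>
  have win: "?covering \<pi> (win \<pi>)" if "\<pi> \<in> ?P" for \<pi>
  proof -
    have "\<exists>!i. ?covering \<pi> i" using up_word_unique_covering_window[OF up] that by simp
    then show ?thesis unfolding win_def by (rule theI')
  qed
  define holes where "holes \<pi> = filter (\<lambda>t. factor u n (win \<pi>) ! t = None) [0..<n]" for \<pi>
  define code where "code \<pi> = (win \<pi>, map (nth \<pi>) (holes \<pi>))" for \<pi>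
  have "code \<pi> \<in> {..<length u - n + 1} \<times> {xs. set xs \<subseteq> {1..n} \<and> length xs = k}"
    if \<pi>: "\<pi> \<in> ?P" for \<pi>
  proof -
    have "win \<pi> + n \<le> length u" using win \<pi> by simp
    moreover from this have "length (holes \<pi>) = k"
      using length_hole_positions[of "factor u n (win \<pi>)"] windows
      by (simp add: holes_def length_factor)
    moreover have "set (map (nth \<pi>) (holes \<pi>)) \<subseteq> {1..n}"
      using is_perm_nth_range \<pi> by (auto simp: holes_def)
    ultimately show ?thesis by (simp add: code_def)
  qed
  then have "code ` ?P \<subseteq> {..<length u - n + 1} \<times> {xs. set xs \<subseteq> {1..n} \<and> length xs = k}"
    by blast
  moreover have "inj_on code ?P"
  proof (rule inj_onI)
    fix \<pi> \<pi>' assume \<pi>: "\<pi> \<in> ?P" and \<pi>': "\<pi>' \<in> ?P" and eq: "code \<pi> = code \<pi>'"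
    define i where "i = win \<pi>"
    have i: "i + n \<le> length u" "covers (factor u n i) \<pi>" "covers (factor u n i) \<pi>'"
      using win[OF \<pi>] win[OF \<pi>'] eq by (simp_all add: i_def code_def)
    show "\<pi> = \<pi>'"
    proof (rule covers_unique_given_holes)
      show "is_perm (length (factor u n i)) \<pi>" "is_perm (length (factor u n i)) \<pi>'"
        using \<pi> \<pi>' i(1) by (simp_all add: length_factor)
      show "distinct_ints (factor u n i)" using up i(1) by (simp add: up_word_def)
      show "covers (factor u n i) \<pi>" "covers (factor u n i) \<pi>'" by (fact i(2), fact i(3))
      fix t assume "t < length (factor u n i)" "factor u n i ! t = None"
      then have "t \<in> set (holes \<pi>)" "holes \<pi> = holes \<pi>'"
        using i(1) eq by (simp_all add: holes_def i_def code_def length_factor)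
      then show "\<pi>!t = \<pi>'!t" using eq by (simp add: code_def map_eq_conv)
    qed
  qed
  moreover have "finite ({..<length u - n + 1} \<times> {xs. set xs \<subseteq> {1..n} \<and> length xs = k})"
    by (simp add: finite_lists_length_eq)
  ultimately have "card ?P \<le> card ({..<length u - n + 1} \<times> {xs. set xs \<subseteq> {1..n} \<and> length xs = k})"
    by (intro card_inj_on_le)
  then show ?thesis by (simp add: card_perms card_cartesian_product card_lists_length_eq)
qed

lemma power_self_le_fact_squared: "n ^ n \<le> fact n * (fact n :: nat)"
proof -
  have "n ^ n = (\<Prod>i\<in>{1..n}. n)" by simp
  also have "\<dots> \<le> (\<Prod>i\<in>{1..n}. i * (n + 1 - i))"
  proof (rule prod_mono)
    fix i assume i: "i \<in> {1..n}"
    then have "n - i \<le> i * (n - i)" using mult_le_mono1[of 1 i "n - i"] by simp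
    moreover have "i * (n + 1 - i) = i * (n - i) + i" using i by (simp add: Suc_diff_le)
    moreover have "n = (n - i) + i" using i by simp
    ultimately have "n \<le> i * (n + 1 - i)" by linarith
    then show "0 \<le> n \<and> n \<le> i * (n + 1 - i)" by simp
  qed
  also have "\<dots> = (\<Prod>i\<in>{1..n}. i) * (\<Prod>i\<in>{1..n}. n + 1 - i)" by (rule prod.distrib)
  also have "(\<Prod>i\<in>{1..n}. n + 1 - i) = (\<Prod>i\<in>{1..n}. i)"
    using prod.atLeastAtMost_rev[of "\<lambda>i. i" 1 n] by simp
  finally show ?thesis by (simp add: fact_prod)
qed

lemma le_of_fact_le_mult_power:
  fixes n k q :: nat
  assumes n: "2 \<le> n" and "1 \<le> k" "1 \<le> q" and fact: "fact n \<le> q * n * n ^ k"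
  shows "n \<le> 2 * (q * k) + 2"
proof -
  have "q \<le> 2 ^ (q - 1)" using less_exp[of "q - 1"] \<open>1 \<le> q\<close> by linarith
  also have "\<dots> \<le> n ^ (q - 1)" using n by (simp add: power_mono)
  finally have "q * n * n ^ k \<le> n ^ (q - 1) * n * n ^ k" by simp
  also have "\<dots> = n ^ (q + k)" using \<open>1 \<le> q\<close> by (simp flip: power_add power_Suc2)
  also have "\<dots> \<le> n ^ (q * k + 1)"
  proof (rule power_increasing)
    show "q + k \<le> q * k + 1" using \<open>1 \<le> q\<close> \<open>1 \<le> k\<close> by (cases q; cases k) auto
  qed (use n in simp)
  finally have "fact n \<le> n ^ (q * k + 1)" using fact by linarith
  then have "n ^ n \<le> n ^ (q * k + 1) * n ^ (q * k + 1)"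
    using power_self_le_fact_squared[of n] mult_le_mono by (meson order_trans)
  also have "(q * k + 1) + (q * k + 1) = 2 * (q * k) + 2" by simp
  then have "n ^ (q * k + 1) * n ^ (q * k + 1) = n ^ (2 * (q * k) + 2)"
    by (simp only: power_add[symmetric])
  finally have "n ^ n \<le> n ^ (2 * (q * k) + 2)" .
  then show ?thesis by (rule power_le_imp_le_exp[rotated]) (use n in simp)
qed

theorem theorem4:
  fixes n :: nat and u :: "letter list"
  assumes "up_word n u" and "\<not> trivial_word u"
  shows "n \<le> 3 * count_list u None + 1"
proof -
  interpret pattern_universal n u using assms(1) by (rule up_word_pattern_universal)
  have "None \<in> set u" using assms(1) by (simp add: up_word_def)
  then have f: "1 \<le> count_list u None" using count_list_0_iff[of u None] by linarith
  show ?thesis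
  proof (cases "n \<le> count_list u None + 2")
    case False
    define k where "k = count_list (factor u n 0) None"
    have windows: "count_list (factor u n i) None = k" if "i + n \<le> length u" for i
      using count_holes_factor_periodic[OF holes_periodic that] False by (simp add: k_def)
    have "0 < n" using False by simp
    with \<open>None \<in> set u\<close> length_ge obtain i where "i + n \<le> length u" "None \<in> set (factor u n i)"
      by (rule exists_window_with_hole)
    then have "1 \<le> k" using windows count_list_0_iff[of "factor u n i" None] by fastforce
    have "fact n \<le> (length u - n + 1) * n ^ k"
      using fact_le_windows_mult_power[OF assms(1) windows] .
    also have "length u - n + 1 \<le> (length u div n) * n"
      using length_ge False div_mult_mod_eq[of "length u" n] mod_less_divisor[of n "length u"]
      by linarith
    finally have "n \<le> 2 * ((length u div n) * k) + 2"
      using False length_ge \<open>1 \<le> k\<close>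
      by (intro le_of_fact_le_mult_power) (auto simp: Suc_le_eq div_greater_zero_iff)
    then show ?thesis using count_holes_ge_blocks[OF windows] f by linarith
  qed (use f in linarith)
qed

end
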